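(* Let $N\in\mathbb N$ and let $\Pi$ be a set of two-coloured partitions containing the four mixed-coloured pair partitions. Let $x=(x_1,\dots,x_N)^T$ be the generators of $C(X_N(\Pi))$ and $u=(u_{ij})$ the fundamental matrix of $G_N(\Pi)$. Then $x_i\mapsto u_{i1}$, $1\le i\le N$, defines a unital $*$-homomorphism $C(X_N(\Pi))\to C(G_N(\Pi))$.
   Context: $[n]:=\{1,\dots,n\}$; $[N]^0=\{\epsilon\}$. A two-coloured partition on $k$ upper and $l$ lower points is a partition of the $k$ upper and $l$ lower points (each row ordered left to right) into non-empty disjoint blocks, each point coloured $1$ (white) or $*$ (black); $\mathcal P(\omega,\omega')$ denotes those with upper colour word $\omega\in\{1,*\}^k$ and lower colour word $\omega'\in\{1,*\}^l$. A through-block contains upper and lower points; $tb(p)$ is their number. A row labeling (labels left to right in $[N]$) is valid if points of that row in a common block carry equal labels; $\epsilon$ is valid. Decomposition of labelings of $p$: $T_0$ (resp. $T'_0$) = invalid upper (resp. lower) row labelings; $r=N^{tb(p)}$; enumerate the assignments of labels in $[N]$ to the through-blocks as $1,\dots,r$; $T_i$ (resp. $T'_i$) = valid upper (resp. lower) row labelings giving each through-block the label of the $i$-th assignment. $a^1:=a$, $a^*$ = adjoint; empty products equal $\mathbb 1$. Mixed-coloured pair partitions: the four partitions consisting of a single block of two points of opposite colours, both in the upper row or both in the lower row. Relations $R^{Gr}_p(u)$ for an $N\times N$ matrix $u$ and $p\in\mathcal P(\omega,\omega')$: (i) $\sum_{t\in T_i}u_{t_1\gamma_1}^{\omega_1}\cdots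 u_{t_k\gamma_k}^{\omega_k}=\sum_{t'\in T'_j}u_{\gamma'_1t'_1}^{\omega'_1}\cdots u_{\gamma'_lt'_l}^{\omega'_l}$ for $1\le i,j\le r$, $\gamma\in T_j$, $\gamma'\in T'_i$; (ii) $\sum_{t\in T_i}u_{t_1\gamma_1}^{\omega_1}\cdots u_{t_k\gamma_k}^{\omega_k}=0$ for $\gamma\in T_0$, $1\le i\le r$; (iii) $\sum_{t'\in T'_j}u_{\gamma'_1t'_1}^{\omega'_1}\cdots u_{\gamma'_lt'_l}^{\omega'_l}=0$ for $\gamma'\in T'_0$, $1\le j\le r$. $C(G_N(\Pi))$ is the universal unital $C^*$-algebra generated by $u_{ij}$ ($1\le i,j\le N$) subject to $R^{Gr}_p(u)$ for all $p\in\Pi$ (easy quantum group $G_N(\Pi)$). Relations $R^{Sp}_p(x)$ for a vector $x=(x_1,\dots,x_N)$ and $p\in\mathcal P(\omega,\omega')$: $\sum_{t\in T_i}x_{t_1}^{\omega_1}\cdots x_{t_k}^{\omega_k}=\sum_{t'\in T'_i}x_{t'_1}^{\omega'_1}\cdots x_{t'_l}^{\omega'_l}$ for all $1\le i\le r$. $C(X_N(\Pi))$ is the universal unital $C^*$-algebra generated by $x_1,\dots,x_N$ subject to $R^{Sp}_p(x)$ for all $p\in\Pi$ (partition quantum space of one vector; it exists since the relations force $\sum_i x_ix_i^*=\mathbb 1$). *)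

theory Defs
  imports Complex_Main "HOL-Library.Disjoint_Sets" "HOL-Library.FuncSet"
begin

class unital_cstar_algebra = banach + real_normed_algebra_1 +
  fixes scaleC :: "complex \<Rightarrow> 'a \<Rightarrow> 'a"
  fixes adj :: "'a \<Rightarrow> 'a"
  assumes scaleC_add_right: "scaleC c (x + y) = scaleC c x + scaleC c y"
    and scaleC_add_left: "scaleC (c + d) x = scaleC c x + scaleC d x"
    and scaleC_scaleC: "scaleC c (scaleC d x) = scaleC (c * d) x"
    and scaleC_one: "scaleC 1 x = x"
    and scaleR_scaleC: "scaleR r x = scaleC (complex_of_real r) x"
    and norm_scaleC: "norm (scaleC c x) = cmod c * norm x"
    and scaleC_mult_left: "scaleC c (x * y) = scaleC c x * y"
    and scaleC_mult_right: "scaleC c (x * y) = x * scaleC c y"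
    and adj_adj: "adj (adj x) = x"
    and adj_add: "adj (x + y) = adj x + adj y"
    and adj_scaleC: "adj (scaleC c x) = scaleC (cnj c) (adj x)"
    and adj_mult: "adj (x * y) = adj y * adj x"
    and cstar_identity: "norm (adj x * x) = norm x * norm x"

datatype colour = White | Black

definition cpow :: "colour \<Rightarrow> 'a::unital_cstar_algebra \<Rightarrow> 'a" where
  "cpow c a = (case c of White \<Rightarrow> a | Black \<Rightarrow> adj a)"

text \<open>A two-coloured partition: upper colour word (length k), lower colour word (length l),
  and blocks on the points; upper point i (0-based) is Inl i, lower point j is Inr j.\<close>

datatype tcpart = TCP (up_col: "colour list") (lo_col: "colour list") (blocks: "(nat + nat) set set")

definition points :: "tcpart \<Rightarrow> (nat + nat) set" where
  "points p = Inl ` {..<length (up_col p)} \<union> Inr ` {..<length (lo_col p)}"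

definition wf_tcpart :: "tcpart \<Rightarrow> bool" where
  "wf_tcpart p \<longleftrightarrow> partition_on (points p) (blocks p)"

definition through_blocks :: "tcpart \<Rightarrow> (nat + nat) set set" where
  "through_blocks p = {B \<in> blocks p. (\<exists>i. Inl i \<in> B) \<and> (\<exists>j. Inr j \<in> B)}"

definition mixed_pair_partitions :: "tcpart set" where
  "mixed_pair_partitions =
     {TCP [White, Black] [] {{Inl 0, Inl 1}}, TCP [Black, White] [] {{Inl 0, Inl 1}},
      TCP [] [White, Black] {{Inr 0, Inr 1}}, TCP [] [Black, White] {{Inr 0, Inr 1}}}"

text \<open>Row labelings with labels in [N] = {1..N}; labels left to right, as lists (0-based positions).\<close>
definition labelings :: "nat \<Rightarrow> nat \<Rightarrow> nat list set" where
  "labelings N k = {t. length t = k \<and> set t \<subseteq> {1..N}}"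

definition valid_upper :: "tcpart \<Rightarrow> nat list \<Rightarrow> bool" where
  "valid_upper p t \<longleftrightarrow> (\<forall>B\<in>blocks p. \<forall>i j. Inl i \<in> B \<longrightarrow> Inl j \<in> B \<longrightarrow> t ! i = t ! j)"

definition valid_lower :: "tcpart \<Rightarrow> nat list \<Rightarrow> bool" where
  "valid_lower p t \<longleftrightarrow> (\<forall>B\<in>blocks p. \<forall>i j. Inr i \<in> B \<longrightarrow> Inr j \<in> B \<longrightarrow> t ! i = t ! j)"

text \<open>Assignments of labels in [N] to the through-blocks (these replace the enumeration 1..r).\<close>
definition assignments :: "tcpart \<Rightarrow> nat \<Rightarrow> ((nat + nat) set \<Rightarrow> nat) set" where
  "assignments p N = PiE (through_blocks p) (\<lambda>_. {1..N})"

definition T0_up :: "tcpart \<Rightarrow> nat \<Rightarrow> nat list set" where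
  "T0_up p N = {t \<in> labelings N (length (up_col p)). \<not> valid_upper p t}"

definition T0_lo :: "tcpart \<Rightarrow> nat \<Rightarrow> nat list set" where
  "T0_lo p N = {t \<in> labelings N (length (lo_col p)). \<not> valid_lower p t}"

definition T_up :: "tcpart \<Rightarrow> nat \<Rightarrow> ((nat + nat) set \<Rightarrow> nat) \<Rightarrow> nat list set" where
  "T_up p N a = {t \<in> labelings N (length (up_col p)). valid_upper p t \<and>
     (\<forall>B\<in>through_blocks p. \<forall>i. Inl i \<in> B \<longrightarrow> t ! i = a B)}"

definition T_lo :: "tcpart \<Rightarrow> nat \<Rightarrow> ((nat + nat) set \<Rightarrow> nat) \<Rightarrow> nat list set" where
  "T_lo p N a = {t \<in> labelings N (length (lo_col p)). valid_lower p t \<and>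
     (\<forall>B\<in>through_blocks p. \<forall>j. Inr j \<in> B \<longrightarrow> t ! j = a B)}"

definition up_mono :: "tcpart \<Rightarrow> (nat \<Rightarrow> nat \<Rightarrow> 'a::unital_cstar_algebra) \<Rightarrow> nat list \<Rightarrow> nat list \<Rightarrow> 'a" where
  "up_mono p u t g = prod_list (map (\<lambda>m. cpow (up_col p ! m) (u (t ! m) (g ! m))) [0..<length (up_col p)])"

definition lo_mono :: "tcpart \<Rightarrow> (nat \<Rightarrow> nat \<Rightarrow> 'a::unital_cstar_algebra) \<Rightarrow> nat list \<Rightarrow> nat list \<Rightarrow> 'a" where
  "lo_mono p u g t = prod_list (map (\<lambda>m. cpow (lo_col p ! m) (u (g ! m) (t ! m))) [0..<length (lo_col p)])"

definition R_Gr :: "nat \<Rightarrow> tcpart \<Rightarrow> (nat \<Rightarrow> nat \<Rightarrow> 'a::unital_cstar_algebra) \<Rightarrow> bool" where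
  "R_Gr N p u \<longleftrightarrow>
     (\<forall>a\<in>assignments p N. \<forall>b\<in>assignments p N. \<forall>g\<in>T_up p N b. \<forall>g'\<in>T_lo p N a.
        (\<Sum>t\<in>T_up p N a. up_mono p u t g) = (\<Sum>t'\<in>T_lo p N b. lo_mono p u g' t')) \<and>
     (\<forall>g\<in>T0_up p N. \<forall>a\<in>assignments p N. (\<Sum>t\<in>T_up p N a. up_mono p u t g) = 0) \<and>
     (\<forall>g'\<in>T0_lo p N. \<forall>b\<in>assignments p N. (\<Sum>t'\<in>T_lo p N b. lo_mono p u g' t') = 0)"

definition vec_mono :: "colour list \<Rightarrow> (nat \<Rightarrow> 'a::unital_cstar_algebra) \<Rightarrow> nat list \<Rightarrow> 'a" where
  "vec_mono w x t = prod_list (map (\<lambda>m. cpow (w ! m) (x (t ! m))) [0..<length w])"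

definition R_Sp :: "nat \<Rightarrow> tcpart \<Rightarrow> (nat \<Rightarrow> 'a::unital_cstar_algebra) \<Rightarrow> bool" where
  "R_Sp N p x \<longleftrightarrow>
     (\<forall>a\<in>assignments p N.
        (\<Sum>t\<in>T_up p N a. vec_mono (up_col p) x t) = (\<Sum>t'\<in>T_lo p N a. vec_mono (lo_col p) x t'))"

end

(* The relations R^Gr_p(u) say that the 0-1 matrix T_p of p intertwines the coloured tensor
   powers of u: T_p u^(k) = u^(l) T_p. The mixed pair partitions make u and its conjugate
   unitary, hence every coloured tensor power of u is unitary. Grouping labelings by the labels
   they put on the through-blocks turns the intertwining relation into a matrix F indexed by
   assignments, and unitarity of u^(k), together with the fact that all sets T_a have the same
   size, gives F F^* = 1. For x the j-th column of u, the upper side of R^Sp_p(x) at an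
   assignment c is then F(c, e), e the constant assignment j, while unitarity of u^(l) shows
   that the adjoint of the lower side is F(c, e)^*. *)

theory Submission
  imports Defs
begin

lemma adj_zero [simp]: "adj (0::'a::unital_cstar_algebra) = 0"
proof -
  have "adj (0::'a) = adj 0 + adj 0"
    using adj_add[of "0::'a" 0] by simp
  then show ?thesis by simp
qed

lemma adj_one [simp]: "adj (1::'a::unital_cstar_algebra) = 1"
proof -
  have "adj (1::'a) = adj (adj 1) * adj 1"
    by (simp only: adj_adj mult_1_left)
  also have "\<dots> = 1"
    by (subst adj_mult[symmetric]) (simp add: adj_adj)
  finally show ?thesis .
qed

lemma adj_sum: "adj (sum f A) = (\<Sum>x\<in>A. adj (f x :: 'a::unital_cstar_algebra))"
  by (induction A rule: infinite_finite_induct) (auto simp: adj_add)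

lemma labelings_0 [simp]: "labelings N 0 = {[]}"
  by (auto simp: labelings_def)

lemma Cons_in_labelings_iff: "x # t \<in> labelings N (Suc n) \<longleftrightarrow> x \<in> {1..N} \<and> t \<in> labelings N n"
  by (auto simp: labelings_def)

lemma labelings_Suc: "labelings N (Suc n) = (\<lambda>(x, t). x # t) ` ({1..N} \<times> labelings N n)"
  by (auto simp: labelings_def image_iff length_Suc_conv)

lemma finite_labelings [simp]: "finite (labelings N n)"
  by (induction n) (auto simp: labelings_Suc)

lemma sum_labelings_Suc:
  "sum f (labelings N (Suc n)) = (\<Sum>x\<in>{1..N}. \<Sum>t\<in>labelings N n. f (x # t))"
proof -
  have "inj_on (\<lambda>(x, t). x # t) ({1..N} \<times> labelings N n)"
    by (auto simp: inj_on_def)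
  then show ?thesis
    by (simp add: labelings_Suc sum.reindex sum.cartesian_product split_def)
qed

lemma nth_in_labelings: "t \<in> labelings N n \<Longrightarrow> i < n \<Longrightarrow> t ! i \<in> {1..N}"
  unfolding labelings_def using nth_mem by blast

lemma labelingsI: "length t = n \<Longrightarrow> (\<And>i. i < n \<Longrightarrow> t ! i \<in> {1..N}) \<Longrightarrow> t \<in> labelings N n"
  by (auto simp: labelings_def in_set_conv_nth)

lemma replicate_in_labelings: "x \<in> {1..N} \<Longrightarrow> replicate n x \<in> labelings N n"
  by (auto simp: labelings_def)

section \<open>Coloured tensor powers\<close>

text \<open>\<open>tensor_mono w u t g\<close> is the entry \<open>(t, g)\<close> of the coloured tensor power
  \<open>u\<^sup>\<otimes>\<^sup>w\<close>.\<close>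

definition tensor_mono ::
  "colour list \<Rightarrow> (nat \<Rightarrow> nat \<Rightarrow> 'a::unital_cstar_algebra) \<Rightarrow> nat list \<Rightarrow> nat list \<Rightarrow> 'a" where
  "tensor_mono w u t g = prod_list (map (\<lambda>m. cpow (w ! m) (u (t ! m) (g ! m))) [0..<length w])"

lemma tensor_mono_Nil [simp]: "tensor_mono [] u t g = 1"
  by (simp add: tensor_mono_def)

lemma tensor_mono_Cons [simp]:
  "tensor_mono (c # w) u (x # t) (y # g) = cpow c (u x y) * tensor_mono w u t g"
proof -
  have "[0..<length (c # w)] = 0 # map Suc [0..<length w]"
    by (simp add: map_Suc_upt upt_conv_Cons del: upt_Suc)
  then show ?thesis
    by (simp add: tensor_mono_def o_def)
qed

lemma up_mono_eq_tensor_mono: "up_mono p u t g = tensor_mono (up_col p) u t g"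
  by (simp add: up_mono_def tensor_mono_def)

lemma lo_mono_eq_tensor_mono: "lo_mono p u g t = tensor_mono (lo_col p) u g t"
  by (simp add: lo_mono_def tensor_mono_def)

lemma vec_mono_eq_tensor_mono:
  "vec_mono w (\<lambda>i. u i j) t = tensor_mono w u t (replicate (length w) j)"
  unfolding vec_mono_def tensor_mono_def by (auto intro!: arg_cong[where f = prod_list])

text \<open>For \<open>c = White\<close> the assumptions say that \<open>u\<close> is unitary, for \<open>c = Black\<close>
  that its entrywise adjoint is.\<close>

locale biunitary =
  fixes N :: nat and u :: "nat \<Rightarrow> nat \<Rightarrow> 'a::unital_cstar_algebra"
  assumes rows_orthonormal: "\<And>i j. i \<in> {1..N} \<Longrightarrow> j \<in> {1..N} \<Longrightarrow>
      (\<Sum>s\<in>{1..N}. cpow c (u i s) * adj (cpow c (u j s))) = (if i = j then 1 else 0)"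
    and cols_orthonormal: "\<And>i j. i \<in> {1..N} \<Longrightarrow> j \<in> {1..N} \<Longrightarrow>
      (\<Sum>s\<in>{1..N}. adj (cpow c (u s i)) * cpow c (u s j)) = (if i = j then 1 else 0)"
begin

lemma tensor_rows_orthonormal:
  assumes "t \<in> labelings N (length w)" and "t' \<in> labelings N (length w)"
  shows "(\<Sum>g\<in>labelings N (length w). tensor_mono w u t g * adj (tensor_mono w u t' g))
    = (if t = t' then 1 else 0)"
  using assms
proof (induction w arbitrary: t t')
  case Nil
  then show ?case by simp
next
  case (Cons c w)
  obtain x r x' r' where t: "t = x # r" "t' = x' # r'"
    using Cons.prems by (cases t; cases t') (auto simp: labelings_def)
  have x: "x \<in> {1..N}" "x' \<in> {1..N}" and r: "r \<in> labelings N (length w)" "r' \<in> labelings N (length w)"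
    using Cons.prems by (auto simp: t Cons_in_labelings_iff)
  have "(\<Sum>g\<in>labelings N (length (c # w)). tensor_mono (c # w) u t g * adj (tensor_mono (c # w) u t' g))
      = (\<Sum>y\<in>{1..N}. cpow c (u x y) *
          (\<Sum>g\<in>labelings N (length w). tensor_mono w u r g * adj (tensor_mono w u r' g)) *
          adj (cpow c (u x' y)))"
    by (simp add: sum_labelings_Suc t adj_mult mult.assoc sum_distrib_left sum_distrib_right)
  also have "\<dots> = (\<Sum>y\<in>{1..N}. cpow c (u x y) * (if r = r' then 1 else 0) * adj (cpow c (u x' y)))"
    using Cons.IH[OF r] by simp
  also have "\<dots> = (if t = t' then 1 else 0)"
    using rows_orthonormal[OF x, of c] by (auto simp: t)
  finally show ?case .
qed

lemma tensor_cols_orthonormal: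
  assumes "g \<in> labelings N (length w)" and "g' \<in> labelings N (length w)"
  shows "(\<Sum>t\<in>labelings N (length w). adj (tensor_mono w u t g) * tensor_mono w u t g')
    = (if g = g' then 1 else 0)"
  using assms
proof (induction w arbitrary: g g')
  case Nil
  then show ?case by simp
next
  case (Cons c w)
  obtain y r y' r' where g: "g = y # r" "g' = y' # r'"
    using Cons.prems by (cases g; cases g') (auto simp: labelings_def)
  have y: "y \<in> {1..N}" "y' \<in> {1..N}" and r: "r \<in> labelings N (length w)" "r' \<in> labelings N (length w)"
    using Cons.prems by (auto simp: g Cons_in_labelings_iff)
  have "(\<Sum>t\<in>labelings N (length (c # w)). adj (tensor_mono (c # w) u t g) * tensor_mono (c # w) u t g')
      = (\<Sum>t\<in>labelings N (length w). adj (tensor_mono w u t r) *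
          (\<Sum>x\<in>{1..N}. adj (cpow c (u x y)) * cpow c (u x y')) * tensor_mono w u t r')"
    by (simp add: sum_labelings_Suc g adj_mult mult.assoc sum_distrib_left sum_distrib_right)
      (rule sum.swap)
  also have "\<dots> = (\<Sum>t\<in>labelings N (length w). adj (tensor_mono w u t r) * (if y = y' then 1 else 0) *
      tensor_mono w u t r')"
    using cols_orthonormal[OF y, of c] by simp
  also have "\<dots> = (if g = g' then 1 else 0)"
    using Cons.IH[OF r] by (auto simp: g)
  finally show ?case .
qed

end

section \<open>Pair partitions\<close>

lemma labelings_2: "labelings N 2 = {[x, y] | x y. x \<in> {1..N} \<and> y \<in> {1..N}}"
  by (auto simp: labelings_def numeral_2_eq_2 length_Suc_conv)

lemma sum_diagonal_labelings_2:
  "(\<Sum>t\<in>{t \<in> labelings N 2. t ! 0 = t ! 1}. f t) = (\<Sum>s\<in>{1..N}. f [s, s])"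
proof -
  have "{t \<in> labelings N 2. t ! 0 = t ! 1} = (\<lambda>s. [s, s]) ` {1..N}"
    by (auto simp: labelings_2)
  moreover have "inj_on (\<lambda>s. [s, s]) {1..N}"
    by (auto simp: inj_on_def)
  ultimately show ?thesis
    by (simp add: sum.reindex)
qed

lemma R_Gr_lower_pair:
  fixes u :: "nat \<Rightarrow> nat \<Rightarrow> 'a::unital_cstar_algebra"
  assumes R: "R_Gr N (TCP [] [c1, c2] {{Inr 0, Inr 1}}) u" and ij: "i \<in> {1..N}" "j \<in> {1..N}"
  shows "(\<Sum>s\<in>{1..N}. cpow c1 (u i s) * cpow c2 (u j s)) = (if i = j then 1 else 0)"
proof -
  define p where "p = TCP [] [c1, c2] {{Inr 0, Inr 1}}"
  define a where "a = (\<lambda>_::(nat + nat) set. undefined::nat)"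
  have "through_blocks p = {}"
    by (auto simp: through_blocks_def p_def)
  then have a: "a \<in> assignments p N" and T_up: "T_up p N a = {[]}"
    and T_lo: "T_lo p N a = {t \<in> labelings N 2. t ! 0 = t ! 1}"
    and T0_lo: "T0_lo p N = {t \<in> labelings N 2. t ! 0 \<noteq> t ! 1}"
    by (auto simp: assignments_def a_def T_up_def T_lo_def T0_lo_def valid_upper_def
        valid_lower_def p_def numeral_2_eq_2)
  have upper: "(\<Sum>t\<in>T_up p N a. up_mono p u t []) = 1"
    unfolding T_up by (simp add: up_mono_def p_def)
  have lower: "(\<Sum>t\<in>T_lo p N a. lo_mono p u [i, j] t) =
      (\<Sum>s\<in>{1..N}. cpow c1 (u i s) * cpow c2 (u j s))"
    unfolding T_lo sum_diagonal_labelings_2 by (simp add: lo_mono_eq_tensor_mono p_def)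
  show ?thesis
  proof (cases "i = j")
    case True
    then have "[i, j] \<in> T_lo p N a"
      using ij by (simp add: T_lo labelings_2)
    then show ?thesis
      using R a T_up upper lower True unfolding R_Gr_def p_def[symmetric] by force
  next
    case False
    then have "[i, j] \<in> T0_lo p N"
      using ij by (simp add: T0_lo labelings_2)
    then show ?thesis
      using R a lower False unfolding R_Gr_def p_def[symmetric] by force
  qed
qed

lemma R_Gr_upper_pair:
  fixes u :: "nat \<Rightarrow> nat \<Rightarrow> 'a::unital_cstar_algebra"
  assumes R: "R_Gr N (TCP [c1, c2] [] {{Inl 0, Inl 1}}) u" and ij: "i \<in> {1..N}" "j \<in> {1..N}"
  shows "(\<Sum>s\<in>{1..N}. cpow c1 (u s i) * cpow c2 (u s j)) = (if i = j then 1 else 0)"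
proof -
  define p where "p = TCP [c1, c2] [] {{Inl 0, Inl 1}}"
  define a where "a = (\<lambda>_::(nat + nat) set. undefined::nat)"
  have "through_blocks p = {}"
    by (auto simp: through_blocks_def p_def)
  then have a: "a \<in> assignments p N" and T_lo: "T_lo p N a = {[]}"
    and T_up: "T_up p N a = {t \<in> labelings N 2. t ! 0 = t ! 1}"
    and T0_up: "T0_up p N = {t \<in> labelings N 2. t ! 0 \<noteq> t ! 1}"
    by (auto simp: assignments_def a_def T_up_def T_lo_def T0_up_def valid_upper_def
        valid_lower_def p_def numeral_2_eq_2)
  have lower: "(\<Sum>t\<in>T_lo p N a. lo_mono p u [] t) = 1"
    unfolding T_lo by (simp add: lo_mono_def p_def)
  have upper: "(\<Sum>t\<in>T_up p N a. up_mono p u t [i, j]) =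
      (\<Sum>s\<in>{1..N}. cpow c1 (u s i) * cpow c2 (u s j))"
    unfolding T_up sum_diagonal_labelings_2 by (simp add: up_mono_eq_tensor_mono p_def)
  show ?thesis
  proof (cases "i = j")
    case True
    then have "[i, j] \<in> T_up p N a"
      using ij by (simp add: T_up labelings_2)
    then show ?thesis
      using R a T_lo upper lower True unfolding R_Gr_def p_def[symmetric] by force
  next
    case False
    then have "[i, j] \<in> T0_up p N"
      using ij by (simp add: T0_up labelings_2)
    then show ?thesis
      using R a upper False unfolding R_Gr_def p_def[symmetric] by force
  qed
qed

lemma mixed_pair_partitions_biunitary:
  fixes u :: "nat \<Rightarrow> nat \<Rightarrow> 'a::unital_cstar_algebra"
  assumes "\<forall>q\<in>mixed_pair_partitions. R_Gr N q u"
  shows "biunitary N u"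
proof
  fix i j c assume ij: "i \<in> {1..N}" "j \<in> {1..N}"
  show "(\<Sum>s\<in>{1..N}. cpow c (u i s) * adj (cpow c (u j s))) = (if i = j then 1 else 0)"
    using assms R_Gr_lower_pair[OF _ ij, of White Black u] R_Gr_lower_pair[OF _ ij, of Black White u]
    by (cases c) (auto simp: mixed_pair_partitions_def cpow_def adj_adj)
  show "(\<Sum>s\<in>{1..N}. adj (cpow c (u s i)) * cpow c (u s j)) = (if i = j then 1 else 0)"
    using assms R_Gr_upper_pair[OF _ ij, of Black White u] R_Gr_upper_pair[OF _ ij, of White Black u]
    by (cases c) (auto simp: mixed_pair_partitions_def cpow_def adj_adj)
qed

section \<open>Labelings of one row\<close>

definition valid_row :: "tcpart \<Rightarrow> (nat \<Rightarrow> nat + nat) \<Rightarrow> nat list \<Rightarrow> bool" where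
  "valid_row p s t \<longleftrightarrow> (\<forall>B\<in>blocks p. \<forall>i j. s i \<in> B \<longrightarrow> s j \<in> B \<longrightarrow> t ! i = t ! j)"

definition T_row ::
  "tcpart \<Rightarrow> nat \<Rightarrow> (nat \<Rightarrow> nat + nat) \<Rightarrow> nat \<Rightarrow> ((nat + nat) set \<Rightarrow> nat) \<Rightarrow> nat list set" where
  "T_row p N s n a = {t \<in> labelings N n. valid_row p s t \<and>
     (\<forall>B\<in>through_blocks p. \<forall>i. s i \<in> B \<longrightarrow> t ! i = a B)}"

lemma T_up_eq_T_row: "T_up p N a = T_row p N Inl (length (up_col p)) a"
  by (simp add: T_up_def T_row_def valid_row_def valid_upper_def)

lemma T_lo_eq_T_row: "T_lo p N a = T_row p N Inr (length (lo_col p)) a"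
  by (simp add: T_lo_def T_row_def valid_row_def valid_lower_def)

lemma T0_up_eq: "T0_up p N = {t \<in> labelings N (length (up_col p)). \<not> valid_row p Inl t}"
  by (simp add: T0_up_def valid_row_def valid_upper_def)

lemma T0_lo_eq: "T0_lo p N = {t \<in> labelings N (length (lo_col p)). \<not> valid_row p Inr t}"
  by (simp add: T0_lo_def valid_row_def valid_lower_def)

definition const_assignment :: "tcpart \<Rightarrow> nat \<Rightarrow> (nat + nat) set \<Rightarrow> nat" where
  "const_assignment p j = restrict (\<lambda>_. j) (through_blocks p)"

lemma through_blocks_subset: "through_blocks p \<subseteq> blocks p"
  by (auto simp: through_blocks_def)

text \<open>The points of the row are \<open>s 0, \<dots>, s (n - 1)\<close>; \<open>s\<close> is \<open>Inl\<close> for the upper and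
  \<open>Inr\<close> for the lower row.\<close>

locale partition_row =
  fixes p :: tcpart and N :: nat and s :: "nat \<Rightarrow> nat + nat" and n :: nat
  assumes disjoint_blocks: "disjoint (blocks p)"
    and finite_blocks: "finite (blocks p)"
    and block_in_row: "\<And>B i. B \<in> blocks p \<Longrightarrow> s i \<in> B \<Longrightarrow> i < n"
    and through_block_meets_row: "\<And>B. B \<in> through_blocks p \<Longrightarrow> \<exists>i. s i \<in> B"
begin

abbreviation T :: "((nat + nat) set \<Rightarrow> nat) \<Rightarrow> nat list set" where
  "T \<equiv> T_row p N s n"

lemma finite_assignments [simp]: "finite (assignments p N)"
  using finite_subset[OF through_blocks_subset finite_blocks]
  by (simp add: assignments_def finite_PiE)

lemma T_row_subset_labelings: "T a \<subseteq> labelings N n"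
  by (auto simp: T_row_def)

lemma finite_T_row [simp]: "finite (T a)"
  using T_row_subset_labelings by (rule finite_subset) simp

lemma T_row_disjoint:
  assumes "a \<in> assignments p N" "b \<in> assignments p N" "t \<in> T a" "t \<in> T b"
  shows "a = b"
  using assms(1,2) unfolding assignments_def
proof (rule PiE_ext)
  fix B assume "B \<in> through_blocks p"
  moreover obtain i where "s i \<in> B"
    using through_block_meets_row[OF \<open>B \<in> through_blocks p\<close>] by blast
  ultimately show "a B = b B"
    using assms(3,4) by (auto simp: T_row_def)
qed

lemma valid_row_in_T_row:
  assumes t: "t \<in> labelings N n" and valid: "valid_row p s t"
  obtains a where "a \<in> assignments p N" "t \<in> T a"
proof
  define a where "a = restrict (\<lambda>B. t ! (SOME i. s i \<in> B)) (through_blocks p)"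
  have some_in: "s (SOME i. s i \<in> B) \<in> B" if "B \<in> through_blocks p" for B
    using through_block_meets_row[OF that] by (rule someI_ex)
  have "t ! (SOME i. s i \<in> B) \<in> {1..N}" if B: "B \<in> through_blocks p" for B
  proof -
    have "(SOME i. s i \<in> B) < n"
      using block_in_row some_in B through_blocks_subset by blast
    then show ?thesis
      by (rule nth_in_labelings[OF t])
  qed
  then show "a \<in> assignments p N"
    by (simp add: a_def assignments_def)
  have "t ! i = a B" if "B \<in> through_blocks p" "s i \<in> B" for B i
    using valid some_in that through_blocks_subset unfolding valid_row_def a_def by auto
  then show "t \<in> T a"
    using t valid by (simp add: T_row_def)
qed

text \<open>Overwriting the labels of the through-block points by those of an assignment \<open>a\<close>
  maps every \<open>T b\<close> bijectively onto \<open>T a\<close>.\<close>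

definition relabel :: "((nat + nat) set \<Rightarrow> nat) \<Rightarrow> nat list \<Rightarrow> nat list" where
  "relabel a t = map (\<lambda>i. if \<exists>B\<in>through_blocks p. s i \<in> B
     then a (THE B. B \<in> through_blocks p \<and> s i \<in> B) else t ! i) [0..<n]"

lemma the_through_block:
  assumes "B \<in> through_blocks p" "s i \<in> B"
  shows "(THE B'. B' \<in> through_blocks p \<and> s i \<in> B') = B"
proof (rule the_equality)
  fix B' assume "B' \<in> through_blocks p \<and> s i \<in> B'"
  then show "B' = B"
    using assms disjointD[OF disjoint_blocks] through_blocks_subset by blast
qed (use assms in simp)

lemma nth_relabel_through:
  assumes "B \<in> through_blocks p" "s i \<in> B"
  shows "relabel a t ! i = a B"
proof -
  have "i < n"
    using assms block_in_row through_blocks_subset by blast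
  then show ?thesis
    using assms by (auto simp: relabel_def the_through_block)
qed

lemma nth_relabel_other:
  "i < n \<Longrightarrow> \<not> (\<exists>B\<in>through_blocks p. s i \<in> B) \<Longrightarrow> relabel a t ! i = t ! i"
  by (simp add: relabel_def)

lemma nth_relabel_non_through_block:
  assumes "B \<in> blocks p" "B \<notin> through_blocks p" "s i \<in> B"
  shows "relabel a t ! i = t ! i"
proof (rule nth_relabel_other)
  show "i < n"
    using assms block_in_row by blast
  show "\<not> (\<exists>B'\<in>through_blocks p. s i \<in> B')"
    using assms disjointD[OF disjoint_blocks] through_blocks_subset by blast
qed

lemma relabel_in_labelings:
  assumes a: "a \<in> assignments p N" and t: "t \<in> labelings N n"
  shows "relabel a t \<in> labelings N n"
proof (rule labelingsI)
  show "length (relabel a t) = n"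
    by (simp add: relabel_def)
  fix i assume i: "i < n"
  show "relabel a t ! i \<in> {1..N}"
  proof (cases "\<exists>B\<in>through_blocks p. s i \<in> B")
    case True
    then obtain B where "B \<in> through_blocks p" "s i \<in> B"
      by blast
    then have "relabel a t ! i = a B" and "a B \<in> {1..N}"
      using a by (auto simp only: nth_relabel_through assignments_def PiE_iff)
    then show ?thesis
      by simp
  next
    case False
    then have "relabel a t ! i = t ! i"
      using i by (rule nth_relabel_other[rotated])
    then show ?thesis
      using nth_in_labelings[OF t i] by simp
  qed
qed

lemma valid_row_relabel:
  assumes "valid_row p s t"
  shows "valid_row p s (relabel a t)"
  unfolding valid_row_def
proof (intro ballI allI impI)
  fix B i j assume B: "B \<in> blocks p" and ij: "s i \<in> B" "s j \<in> B"
  show "relabel a t ! i = relabel a t ! j"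
  proof (cases "B \<in> through_blocks p")
    case True
    then show ?thesis
      using nth_relabel_through[OF True ij(1)] nth_relabel_through[OF True ij(2)] by simp
  next
    case False
    then show ?thesis
      using assms B ij nth_relabel_non_through_block[OF B False] unfolding valid_row_def by metis
  qed
qed

lemma relabel_in_T_row:
  assumes "a \<in> assignments p N" "t \<in> T b"
  shows "relabel a t \<in> T a"
  using assms relabel_in_labelings valid_row_relabel nth_relabel_through
  by (simp add: T_row_def)

lemma relabel_relabel:
  assumes t: "t \<in> T a"
  shows "relabel a (relabel b t) = t"
proof (rule nth_equalityI)
  show "length (relabel a (relabel b t)) = length t"
    using t by (simp add: relabel_def T_row_def labelings_def)
next
  fix i assume "i < length (relabel a (relabel b t))"
  then have i: "i < n"
    by (simp add: relabel_def)
  show "relabel a (relabel b t) ! i = t ! i"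
  proof (cases "\<exists>B\<in>through_blocks p. s i \<in> B")
    case True
    then obtain B where "B \<in> through_blocks p" "s i \<in> B"
      by blast
    then show ?thesis
      using t by (simp add: nth_relabel_through T_row_def)
  next
    case False
    then show ?thesis
      using i by (simp add: nth_relabel_other)
  qed
qed

lemma card_T_row_eq:
  assumes "a \<in> assignments p N" "b \<in> assignments p N"
  shows "card (T a) = card (T b)"
proof -
  have "bij_betw (relabel b) (T a) (T b)"
    by (rule bij_betwI[where g = "relabel a"]) (auto simp: assms relabel_in_T_row relabel_relabel)
  then show ?thesis
    by (rule bij_betw_same_card)
qed

lemma const_assignment_in_assignments: "j \<in> {1..N} \<Longrightarrow> const_assignment p j \<in> assignments p N"
  by (simp add: const_assignment_def assignments_def)

lemma replicate_in_T_row: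
  assumes j: "j \<in> {1..N}"
  shows "replicate n j \<in> T (const_assignment p j)"
proof -
  have "valid_row p s (replicate n j)"
    using block_in_row by (auto simp: valid_row_def)
  moreover have "replicate n j ! i = const_assignment p j B"
    if "B \<in> through_blocks p" "s i \<in> B" for B i
  proof -
    have "i < n"
      using block_in_row that through_blocks_subset by blast
    then show ?thesis
      using that by (simp add: const_assignment_def)
  qed
  ultimately show ?thesis
    using j by (simp add: T_row_def replicate_in_labelings)
qed

lemma replicate_in_T_row_iff:
  "j \<in> {1..N} \<Longrightarrow> b \<in> assignments p N \<Longrightarrow> replicate n j \<in> T b \<longleftrightarrow> b = const_assignment p j"
  using T_row_disjoint const_assignment_in_assignments replicate_in_T_row by blast

lemma T_row_nonempty: "1 \<le> N \<Longrightarrow> a \<in> assignments p N \<Longrightarrow> T a \<noteq> {}"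
  using relabel_in_T_row replicate_in_T_row[of 1] by fastforce

lemma sum_labelings_by_assignment:
  assumes "\<And>t. t \<in> labelings N n \<Longrightarrow> \<not> valid_row p s t \<Longrightarrow> f t = 0"
  shows "sum f (labelings N n) = (\<Sum>b\<in>assignments p N. \<Sum>t\<in>T b. f t)"
proof -
  have "(\<Sum>t\<in>T b. f t) = (\<Sum>t\<in>labelings N n. if t \<in> T b then f t else 0)" for b
    using T_row_subset_labelings[of b]
    by (simp add: sum.inter_restrict[OF finite_labelings, symmetric] Int_absorb1)
  then have "(\<Sum>b\<in>assignments p N. \<Sum>t\<in>T b. f t)
      = (\<Sum>b\<in>assignments p N. \<Sum>t\<in>labelings N n. if t \<in> T b then f t else 0)"
    by simp
  also have "\<dots> = (\<Sum>t\<in>labelings N n. \<Sum>b\<in>assignments p N. if t \<in> T b then f t else 0)"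
    by (rule sum.swap)
  also have "\<dots> = sum f (labelings N n)"
  proof (rule sum.cong[OF refl])
    fix t assume t: "t \<in> labelings N n"
    show "(\<Sum>b\<in>assignments p N. if t \<in> T b then f t else 0) = f t"
    proof (cases "valid_row p s t")
      case True
      obtain a where a: "a \<in> assignments p N" "t \<in> T a"
        using t True by (rule valid_row_in_T_row)
      then have "(\<Sum>b\<in>assignments p N. if t \<in> T b then f t else 0)
          = (\<Sum>b\<in>assignments p N. if b = a then f t else 0)"
        using T_row_disjoint by (intro sum.cong refl) auto
      then show ?thesis
        using a by simp
    next
      case False
      then show ?thesis
        using assms t by (simp add: T_row_def)
    qed
  qed
  finally show ?thesis ..
qed

end

lemma wf_tcpart_finite_blocks:
  assumes "wf_tcpart p"
  shows "finite (blocks p)"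
proof -
  have "finite (points p)"
    by (simp add: points_def)
  then have "finite (\<Union>(blocks p))"
    using assms partition_onD1[of "points p" "blocks p"] by (simp add: wf_tcpart_def)
  then show ?thesis
    by (rule finite_UnionD)
qed

lemma wf_tcpart_block_subset_points:
  "wf_tcpart p \<Longrightarrow> B \<in> blocks p \<Longrightarrow> B \<subseteq> points p"
  unfolding wf_tcpart_def using partition_onD1 by blast

lemma wf_tcpart_upper_row:
  assumes "wf_tcpart p"
  shows "partition_row p Inl (length (up_col p))"
proof
  show "disjoint (blocks p)"
    using assms partition_onD2 by (auto simp: wf_tcpart_def)
  show "finite (blocks p)"
    using assms by (rule wf_tcpart_finite_blocks)
  show "i < length (up_col p)" if "B \<in> blocks p" "Inl i \<in> B" for B i
    using wf_tcpart_block_subset_points[OF assms that(1)] that(2) by (auto simp: points_def)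
  show "\<exists>i. Inl i \<in> B" if "B \<in> through_blocks p" for B
    using that by (auto simp: through_blocks_def)
qed

lemma wf_tcpart_lower_row:
  assumes "wf_tcpart p"
  shows "partition_row p Inr (length (lo_col p))"
proof
  show "disjoint (blocks p)"
    using assms partition_onD2 by (auto simp: wf_tcpart_def)
  show "finite (blocks p)"
    using assms by (rule wf_tcpart_finite_blocks)
  show "i < length (lo_col p)" if "B \<in> blocks p" "Inr i \<in> B" for B i
    using wf_tcpart_block_subset_points[OF assms that(1)] that(2) by (auto simp: points_def)
  show "\<exists>i. Inr i \<in> B" if "B \<in> through_blocks p" for B
    using that by (auto simp: through_blocks_def)
qed

section \<open>The intertwining relation\<close>

text \<open>For the 0-1 matrix \<open>T\<^sub>p\<close> of \<open>p\<close>, the relations \<open>R\<^sup>G\<^sup>r\<^sub>p(u)\<close> say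
  \<open>T\<^sub>p u\<^sup>\<otimes>\<^sup>k = u\<^sup>\<otimes>\<^sup>l T\<^sub>p\<close>; \<open>up_sum a g\<close> and \<open>lo_sum b g'\<close> are the entries of the two sides in
  rows \<open>g' \<in> T'\<^sub>a\<close> and columns \<open>g \<in> T\<^sub>b\<close>, and \<open>coeff a b\<close> is their common value.\<close>

locale gr_intertwiner = biunitary N u
  for N :: nat and u :: "nat \<Rightarrow> nat \<Rightarrow> 'a::unital_cstar_algebra" +
  fixes p :: tcpart
  assumes N_pos: "1 \<le> N"
    and wf: "wf_tcpart p"
    and relations: "R_Gr N p u"
begin

sublocale up: partition_row p N Inl "length (up_col p)"
  using wf by (rule wf_tcpart_upper_row)

sublocale lo: partition_row p N Inr "length (lo_col p)"
  using wf by (rule wf_tcpart_lower_row)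

abbreviation k :: nat where "k \<equiv> length (up_col p)"
abbreviation l :: nat where "l \<equiv> length (lo_col p)"
abbreviation A :: "((nat + nat) set \<Rightarrow> nat) set" where "A \<equiv> assignments p N"

definition up_sum :: "((nat + nat) set \<Rightarrow> nat) \<Rightarrow> nat list \<Rightarrow> 'a" where
  "up_sum a g = (\<Sum>t\<in>T_up p N a. tensor_mono (up_col p) u t g)"

definition lo_sum :: "((nat + nat) set \<Rightarrow> nat) \<Rightarrow> nat list \<Rightarrow> 'a" where
  "lo_sum b g' = (\<Sum>t\<in>T_lo p N b. tensor_mono (lo_col p) u g' t)"

definition coeff :: "((nat + nat) set \<Rightarrow> nat) \<Rightarrow> ((nat + nat) set \<Rightarrow> nat) \<Rightarrow> 'a" where
  "coeff a b = up_sum a (SOME g. g \<in> T_up p N b)"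

lemma up_sum_eq_lo_sum:
  "a \<in> A \<Longrightarrow> b \<in> A \<Longrightarrow> g \<in> T_up p N b \<Longrightarrow> g' \<in> T_lo p N a \<Longrightarrow> up_sum a g = lo_sum b g'"
  using relations unfolding R_Gr_def up_sum_def lo_sum_def up_mono_eq_tensor_mono lo_mono_eq_tensor_mono
  by blast

lemma up_sum_invalid: "g \<in> labelings N k \<Longrightarrow> \<not> valid_row p Inl g \<Longrightarrow> a \<in> A \<Longrightarrow> up_sum a g = 0"
  using relations unfolding R_Gr_def up_sum_def up_mono_eq_tensor_mono T0_up_eq by blast

lemma lo_sum_invalid: "g' \<in> labelings N l \<Longrightarrow> \<not> valid_row p Inr g' \<Longrightarrow> b \<in> A \<Longrightarrow> lo_sum b g' = 0"
  using relations unfolding R_Gr_def lo_sum_def lo_mono_eq_tensor_mono T0_lo_eq by blast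

lemma T_up_nonempty: "a \<in> A \<Longrightarrow> T_up p N a \<noteq> {}"
  using up.T_row_nonempty[OF N_pos] by (simp add: T_up_eq_T_row)

lemma T_lo_nonempty: "a \<in> A \<Longrightarrow> T_lo p N a \<noteq> {}"
  using lo.T_row_nonempty[OF N_pos] by (simp add: T_lo_eq_T_row)

lemma up_sum_eq_coeff:
  assumes "a \<in> A" "b \<in> A" "g \<in> T_up p N b"
  shows "up_sum a g = coeff a b"
proof -
  obtain g' where "g' \<in> T_lo p N a"
    using T_lo_nonempty[OF assms(1)] by blast
  moreover have "(SOME g. g \<in> T_up p N b) \<in> T_up p N b"
    using T_up_nonempty[OF assms(2)] by (simp add: some_in_eq)
  ultimately show ?thesis
    using assms up_sum_eq_lo_sum unfolding coeff_def by metis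
qed

lemma lo_sum_eq_coeff:
  assumes "a \<in> A" "b \<in> A" "g' \<in> T_lo p N a"
  shows "lo_sum b g' = coeff a b"
proof -
  obtain g where "g \<in> T_up p N b"
    using T_up_nonempty[OF assms(2)] by blast
  then show ?thesis
    using assms up_sum_eq_lo_sum up_sum_eq_coeff by metis
qed

lemma sum_up_sum_mult_adj:
  assumes a: "a \<in> A" and c: "c \<in> A"
  shows "(\<Sum>g\<in>labelings N k. up_sum a g * adj (up_sum c g))
    = (if a = c then of_nat (card (T_up p N a)) else 0)"
proof -
  have lab: "T_up p N b \<subseteq> labelings N k" for b
    using up.T_row_subset_labelings by (simp add: T_up_eq_T_row)
  have "(\<Sum>g\<in>labelings N k. up_sum a g * adj (up_sum c g))
      = (\<Sum>t\<in>T_up p N a. \<Sum>t'\<in>T_up p N c.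
          \<Sum>g\<in>labelings N k. tensor_mono (up_col p) u t g * adj (tensor_mono (up_col p) u t' g))"
    unfolding up_sum_def adj_sum sum_product
    by (subst sum.swap) (rule sum.cong[OF refl], rule sum.swap)
  also have "\<dots> = (\<Sum>t\<in>T_up p N a. \<Sum>t'\<in>T_up p N c. if t = t' then 1 else 0)"
    using lab by (intro sum.cong refl tensor_rows_orthonormal) auto
  also have "\<dots> = (\<Sum>t\<in>T_up p N a. if t \<in> T_up p N c then 1 else 0)"
    by (simp add: T_up_eq_T_row)
  also have "\<dots> = (if a = c then of_nat (card (T_up p N a)) else 0)"
    using up.T_row_disjoint[OF a c] by (auto simp: T_up_eq_T_row intro!: sum.neutral)
  finally show ?thesis .
qed

lemma sum_up_sum_mult_adj_grouped:
  assumes a: "a \<in> A" and c: "c \<in> A"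
  shows "(\<Sum>g\<in>labelings N k. up_sum a g * adj (up_sum c g))
    = of_nat (card (T_up p N a)) * (\<Sum>b\<in>A. coeff a b * adj (coeff c b))"
proof -
  have "(\<Sum>g\<in>labelings N k. up_sum a g * adj (up_sum c g))
      = (\<Sum>b\<in>A. \<Sum>g\<in>T_up p N b. up_sum a g * adj (up_sum c g))"
    unfolding T_up_eq_T_row using up_sum_invalid a by (intro up.sum_labelings_by_assignment) simp
  also have "\<dots> = (\<Sum>b\<in>A. of_nat (card (T_up p N a)) * (coeff a b * adj (coeff c b)))"
  proof (rule sum.cong[OF refl])
    fix b assume b: "b \<in> A"
    have "card (T_up p N b) = card (T_up p N a)"
      using up.card_T_row_eq[OF b a] by (simp only: T_up_eq_T_row)
    then show "(\<Sum>g\<in>T_up p N b. up_sum a g * adj (up_sum c g))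
        = of_nat (card (T_up p N a)) * (coeff a b * adj (coeff c b))"
      using up_sum_eq_coeff[OF a b] up_sum_eq_coeff[OF c b] by simp
  qed
  finally show ?thesis
    by (simp add: sum_distrib_left)
qed

lemma coeff_rows_orthonormal:
  assumes a: "a \<in> A" and c: "c \<in> A"
  shows "(\<Sum>b\<in>A. coeff a b * adj (coeff c b)) = (if a = c then 1 else 0)"
proof -
  define n where "n = card (T_up p N a)"
  have "n > 0"
    using T_up_nonempty[OF a] up.finite_T_row by (simp add: n_def card_gt_0_iff T_up_eq_T_row)
  have "of_nat n * (\<Sum>b\<in>A. coeff a b * adj (coeff c b)) = of_nat n * (if a = c then 1 else 0)"
    using sum_up_sum_mult_adj[OF a c] sum_up_sum_mult_adj_grouped[OF a c] by (simp add: n_def)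
  then have "real n *\<^sub>R (\<Sum>b\<in>A. coeff a b * adj (coeff c b)) = real n *\<^sub>R (if a = c then 1 else 0)"
    by (simp only: scaleR_conv_of_real of_real_of_nat_eq)
  then show ?thesis
    using \<open>n > 0\<close> by simp
qed

lemma indicator_T_lo_eq:
  assumes c: "c \<in> A" and j: "j \<in> labelings N l"
  shows "(if j \<in> T_lo p N c then 1 else 0) = (\<Sum>b\<in>A. lo_sum b j * adj (coeff c b))"
proof (cases "valid_row p Inr j")
  case True
  then obtain a where a: "a \<in> A" "j \<in> T_lo p N a"
    using lo.valid_row_in_T_row[OF j] by (auto simp: T_lo_eq_T_row)
  have "(\<Sum>b\<in>A. lo_sum b j * adj (coeff c b)) = (\<Sum>b\<in>A. coeff a b * adj (coeff c b))"
    using lo_sum_eq_coeff[OF a(1) _ a(2)] by simp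
  also have "\<dots> = (if a = c then 1 else 0)"
    using a(1) c by (rule coeff_rows_orthonormal)
  also have "\<dots> = (if j \<in> T_lo p N c then 1 else 0)"
    using lo.T_row_disjoint[OF a(1) c] a(2) by (auto simp: T_lo_eq_T_row)
  finally show ?thesis ..
next
  case False
  then show ?thesis
    using lo_sum_invalid[OF j] by (simp add: T_lo_eq_T_row T_row_def)
qed

lemma sum_adj_tensor_mult_lo_sum:
  assumes b: "b \<in> A" and m: "m \<in> {1..N}"
  shows "(\<Sum>j\<in>labelings N l. adj (tensor_mono (lo_col p) u j (replicate l m)) * lo_sum b j)
    = (if b = const_assignment p m then 1 else 0)"
proof -
  have "(\<Sum>j\<in>labelings N l. adj (tensor_mono (lo_col p) u j (replicate l m)) * lo_sum b j)
      = (\<Sum>t\<in>T_lo p N b. \<Sum>j\<in>labelings N l.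
          adj (tensor_mono (lo_col p) u j (replicate l m)) * tensor_mono (lo_col p) u j t)"
    unfolding lo_sum_def sum_distrib_left by (rule sum.swap)
  also have "\<dots> = (\<Sum>t\<in>T_lo p N b. if replicate l m = t then 1 else 0)"
    using lo.T_row_subset_labelings replicate_in_labelings[OF m]
    by (intro sum.cong refl tensor_cols_orthonormal) (auto simp: T_lo_eq_T_row)
  also have "\<dots> = (if replicate l m \<in> T_lo p N b then 1 else 0)"
    by (simp add: T_lo_eq_T_row)
  also have "\<dots> = (if b = const_assignment p m then 1 else 0)"
    using lo.replicate_in_T_row_iff[OF m b] by (simp add: T_lo_eq_T_row)
  finally show ?thesis .
qed

lemma R_Sp_column:
  assumes m: "m \<in> {1..N}"
  shows "R_Sp N p (\<lambda>i. u i m)"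
  unfolding R_Sp_def
proof
  fix c assume c: "c \<in> A"
  let ?e = "const_assignment p m"
  let ?V = "\<lambda>j. tensor_mono (lo_col p) u j (replicate l m)"
  have e: "?e \<in> A"
    using m by (rule up.const_assignment_in_assignments)
  have "(\<Sum>t\<in>T_up p N c. vec_mono (up_col p) (\<lambda>i. u i m) t) = up_sum c (replicate k m)"
    by (simp add: up_sum_def vec_mono_eq_tensor_mono)
  also have "\<dots> = coeff c ?e"
    using up_sum_eq_coeff[OF c e] up.replicate_in_T_row[OF m] by (simp add: T_up_eq_T_row)
  finally have upper: "(\<Sum>t\<in>T_up p N c. vec_mono (up_col p) (\<lambda>i. u i m) t) = coeff c ?e" .
  txt \<open>The lower side is computed through its adjoint, where the unitarity of
    \<open>u\<^sup>\<otimes>\<^sup>l\<close> applies.\<close>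
  have "adj (\<Sum>t\<in>T_lo p N c. vec_mono (lo_col p) (\<lambda>i. u i m) t)
      = (\<Sum>j\<in>labelings N l. adj (?V j) * (if j \<in> T_lo p N c then 1 else 0))"
    using lo.T_row_subset_labelings[of c]
    by (simp add: adj_sum vec_mono_eq_tensor_mono sum.inter_restrict[OF finite_labelings, symmetric]
        Int_absorb1 T_lo_eq_T_row if_distrib[of "\<lambda>x. _ * x"] cong: if_cong)
  also have "\<dots> = (\<Sum>j\<in>labelings N l. \<Sum>b\<in>A. adj (?V j) * lo_sum b j * adj (coeff c b))"
    using indicator_T_lo_eq[OF c] by (simp add: sum_distrib_left mult.assoc)
  also have "\<dots> = (\<Sum>b\<in>A. (\<Sum>j\<in>labelings N l. adj (?V j) * lo_sum b j) * adj (coeff c b))"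
    by (subst sum.swap) (simp add: sum_distrib_right)
  also have "\<dots> = (\<Sum>b\<in>A. if b = ?e then adj (coeff c b) else 0)"
    using sum_adj_tensor_mult_lo_sum[OF _ m] by (intro sum.cong refl) simp
  also have "\<dots> = adj (coeff c ?e)"
    using e by simp
  finally have "adj (\<Sum>t\<in>T_lo p N c. vec_mono (lo_col p) (\<lambda>i. u i m) t) = adj (coeff c ?e)" .
  then show "(\<Sum>t\<in>T_up p N c. vec_mono (up_col p) (\<lambda>i. u i m) t)
      = (\<Sum>t\<in>T_lo p N c. vec_mono (lo_col p) (\<lambda>i. u i m) t)"
    using upper by (metis adj_adj)
qed

end

theorem theorem4p6:
  fixes N :: nat and Parts :: "tcpart set"
    and u :: "nat \<Rightarrow> nat \<Rightarrow> 'a::unital_cstar_algebra"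
  assumes "1 \<le> N"
    and "\<forall>p\<in>Parts. wf_tcpart p"
    and "mixed_pair_partitions \<subseteq> Parts"
    and "\<forall>p\<in>Parts. R_Gr N p u"
  shows "\<forall>p\<in>Parts. R_Sp N p (\<lambda>i. u i 1)"
proof
  fix p assume p: "p \<in> Parts"
  have "biunitary N u"
    using assms(3,4) by (intro mixed_pair_partitions_biunitary) blast
  then interpret gr_intertwiner N u p
    using assms p by (intro gr_intertwiner.intro gr_intertwiner_axioms.intro) auto
  show "R_Sp N p (\<lambda>i. u i 1)"
    using assms(1) by (intro R_Sp_column) simp
qed

end
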